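(* Let $N\ge 1$ be an integer and $a\neq 0$ a complex constant. Let $\big(z_1(\ell),\dots,z_N(\ell)\big)$, $\ell=0,1,2,\dots$, be a sequence of $N$-tuples of complex numbers evolving according to the following discrete-time rule: for every $\ell\ge 0$, the numbers $z_1(\ell+2),\dots,z_N(\ell+2)$ are (in some order, counted with multiplicity) the $N$ roots in $z$ of $$\prod_{j=1}^{N}\frac{z-a^{2}z_j(\ell)}{z-a\,z_j(\ell+1)}=1+a,$$ i.e. of the degree-$N$ polynomial equation $\prod_{j=1}^N\big(z-a^2z_j(\ell)\big)-(1+a)\prod_{j=1}^N\big(z-a z_j(\ell+1)\big)=0$. Define $$v_m(0)=\frac{\prod_{j=1}^{N}\big(z_j(1)-a\,z_m(0)\big)}{\prod_{j=1,\,j\neq m}^{N}\big[a\,\big(z_j(0)-z_m(0)\big)\big]},\qquad m=1,\dots,N,$$ and the $N\times N$ matrix $$U_{nm}(\ell)=\delta_{nm}\,z_n(0)\,a^{\ell}+v_m(0)\,\frac{a^{\ell}-1}{a-1},\qquad n,m=1,\dots,N,$$ where $\frac{a^\ell-1}{a-1}$ is interpreted as $\ell$ when $a=1$. Then for every $\ell\ge0$ the multiset $\{z_1(\ell),\dots,z_N(\ell)\}$ coincides with the multiset of eigenvalues of $U(\ell)$. Equivalently, for every $\ell\ge1$ with $a\neq1$ and $a^\ell\neq1$, the numbers $z_n(\ell)$ are the $N$ solutions $z$ of $$\prod_{k=1}^{N}\frac{z-a^{\ell-1}z_k(1)}{z-a^{\ell}z_k(0)}=\frac{a^{\ell-1}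-1}{a^{\ell}-1}.$$
   Context: $\delta_{nm}$ is the Kronecker delta. Throughout, the data are assumed generic: for every $\ell$ the numbers $z_1(\ell),\dots,z_N(\ell)$ are pairwise distinct and all denominators appearing in the formulas above are nonzero. *)

theory Defs
  imports "Jordan_Normal_Form.Char_Poly"
begin

text \<open>Tuples are indexed by j = 0..N-1 (paper: 1..N). z l j is z_{j+1}(l).\<close>

definition geom_factor :: "complex \<Rightarrow> nat \<Rightarrow> complex" where
  "geom_factor a l = (if a = 1 then of_nat l else (a ^ l - 1) / (a - 1))"

definition v0 :: "nat \<Rightarrow> complex \<Rightarrow> (nat \<Rightarrow> nat \<Rightarrow> complex) \<Rightarrow> nat \<Rightarrow> complex" where
  "v0 N a z m = (\<Prod>j<N. z 1 j - a * z 0 m) / (\<Prod>j\<in>{..<N} - {m}. a * (z 0 j - z 0 m))"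

definition Umat :: "nat \<Rightarrow> complex \<Rightarrow> (nat \<Rightarrow> nat \<Rightarrow> complex) \<Rightarrow> nat \<Rightarrow> complex mat" where
  "Umat N a z l = mat N N (\<lambda>(n, m).
      (if n = m then z 0 n * a ^ l else 0) + v0 N a z m * geom_factor a l)"

definition roots_poly :: "nat \<Rightarrow> (nat \<Rightarrow> complex) \<Rightarrow> complex poly" where
  "roots_poly N w = (\<Prod>j<N. [:- w j, 1:])"

end

theory Submission
  imports Defs
begin

text \<open>
  The matrix U(l) is diagonal plus a rank-one matrix whose rows all equal
  g(l) v(0), with g(l) = (a^l - 1)/(a - 1); by the matrix determinant lemma its
  characteristic polynomial is the secular polynomial
  C_l(x) = \<Prod>_i (x - a^l z_i(0)) - g(l) \<Sum>_m v_m(0) \<Prod>_{i \<noteq> m} (x - a^l z_i(0)).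
  Let R_l(x) = \<Prod>_j (x - z_j(l)); we show R_l = C_l by a two-step induction.
  For l = 0 this holds because g(0) = 0. For l = 1 both sides are monic of degree N
  and agree at the N distinct nodes a z_k(0): this is precisely how v_k(0) is defined.
  The evolution law says -a R_{l+2}(x) = a^(2N) R_l(x/a^2) - (1+a) a^N R_{l+1}(x/a).
  Rescaling C_l by a^2 and C_{l+1} by a moves both onto the nodes a^(l+2) z_i(0),
  and since C is affine in its weight g, the identity reduces to the recurrence
  g(l+2) = (1+a) g(l+1) - a g(l).
\<close>

lemma det_minus_rank_one:
  fixes A B U W :: "'a :: idom mat"
  assumes A: "A \<in> carrier_mat n n" and B: "B \<in> carrier_mat n n" and AB: "A * B = 1\<^sub>m n"
    and U: "U \<in> carrier_mat n 1" and W: "W \<in> carrier_mat 1 n"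
  shows "det (A - U * W) = det A * (1 - (W * B * U) $$ (0, 0))"
proof -
  \<comment> \<open>Reduce M to block-triangular form in two ways: clearing W gives det (A - U W),
    clearing U gives det A times the Schur complement 1 - W B U.\<close>
  define M where "M = four_block_mat A U W (1\<^sub>m 1)"
  define L1 where "L1 = four_block_mat (1\<^sub>m n) (0\<^sub>m n 1) (- W) (1\<^sub>m 1)"
  define L2 where "L2 = four_block_mat (1\<^sub>m n) (- (B * U)) (0\<^sub>m 1 n) (1\<^sub>m 1)"
  have M: "M \<in> carrier_mat (n + 1) (n + 1)"
    unfolding M_def using A U W by auto
  have L1: "L1 \<in> carrier_mat (n + 1) (n + 1)" and L2: "L2 \<in> carrier_mat (n + 1) (n + 1)"
    unfolding L1_def L2_def using B U W by auto
  have AUW: "A - U * W \<in> carrier_mat n n"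
    using A U W by auto
  have "M * L1 = four_block_mat (A - U * W) U (0\<^sub>m 1 n) (1\<^sub>m 1)"
    unfolding M_def L1_def using A U W
    by (subst mult_four_block_mat) (auto simp: mult_minus_distrib_mat minus_add_uminus_mat)
  moreover have "det L1 = 1"
    unfolding L1_def using W by (subst det_four_block_mat_upper_right_zero) auto
  ultimately have det_M1: "det M = det (A - U * W)"
    using det_mult[OF M L1] det_four_block_mat_lower_left_zero[OF AUW U refl one_carrier_mat] by simp
  have S: "1\<^sub>m 1 - W * B * U \<in> carrier_mat 1 1"
    using B U W by auto
  have "M * L2 = four_block_mat A (0\<^sub>m n 1) W (1\<^sub>m 1 - W * B * U)"
  proof -
    have "A * (B * U) = U"
      using A B U AB by (metis assoc_mult_mat left_mult_one_mat)
    moreover have "- (W * (B * U)) + 1\<^sub>m 1 = 1\<^sub>m 1 - W * B * U"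
      using B U W by (intro eq_matI) auto
    ultimately show ?thesis
      unfolding M_def L2_def using A B U W by (subst mult_four_block_mat) auto
  qed
  moreover have "det L2 = 1"
    unfolding L2_def using B U by (subst det_four_block_mat_lower_left_zero) auto
  ultimately have det_M2: "det M = det A * det (1\<^sub>m 1 - W * B * U)"
    using det_mult[OF M L2] det_four_block_mat_upper_right_zero[OF A refl W S] by simp
  show ?thesis
    using det_M1 det_M2 det_single[OF S] B U W by simp
qed

lemma det_mat_diag: "det (mat_diag n d) = (\<Prod>i<n. d i)"
  by (subst det_upper_triangular[of _ n]) (auto simp: mat_diag_def prod_list_diag_prod atLeast0LessThan)

lemma det_diag_minus_rank_one:
  fixes d u w :: "nat \<Rightarrow> 'a :: field"
  assumes d: "\<And>i. i < n \<Longrightarrow> d i \<noteq> 0"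
  shows "det (mat n n (\<lambda>(i, j). (if i = j then d i else 0) - u i * w j))
     = (\<Prod>i<n. d i) * (1 - (\<Sum>i<n. u i * w i / d i))"
proof -
  let ?U = "mat n 1 (\<lambda>(i, _). u i)" and ?W = "mat 1 n (\<lambda>(_, j). w j)"
  have "mat_diag n d * mat_diag n (\<lambda>i. 1 / d i) = 1\<^sub>m n"
    unfolding mat_diag_diag using d by (intro eq_matI) (auto simp: mat_diag_def)
  hence "det (mat_diag n d - ?U * ?W) = det (mat_diag n d) * (1 - (?W * mat_diag n (\<lambda>i. 1 / d i) * ?U) $$ (0, 0))"
    by (intro det_minus_rank_one) auto
  moreover have "mat_diag n d - ?U * ?W = mat n n (\<lambda>(i, j). (if i = j then d i else 0) - u i * w j)"
    by (rule eq_matI) (auto simp: mat_diag_def scalar_prod_def)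
  moreover have "(?W * mat_diag n (\<lambda>i. 1 / d i) * ?U) $$ (0, 0) = (\<Sum>i<n. u i * w i / d i)"
    by (subst mat_diag_mult_right[of _ 1]) (auto simp: scalar_prod_def atLeast0LessThan mult.commute)
  ultimately show ?thesis
    by (simp add: det_mat_diag)
qed

text \<open>The zeros of secular_poly n d c, away from the d i, solve the secular
  equation 1 = \<Sum>_m c m / (x - d m).\<close>

definition secular_poly :: "nat \<Rightarrow> (nat \<Rightarrow> 'a :: comm_ring_1) \<Rightarrow> (nat \<Rightarrow> 'a) \<Rightarrow> 'a poly" where
  "secular_poly n d c = (\<Prod>i<n. [:- d i, 1:]) - (\<Sum>m<n. Polynomial.smult (c m) (\<Prod>i\<in>{..<n} - {m}. [:- d i, 1:]))"

lemma poly_secular_poly: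
  "poly (secular_poly n d c) x = (\<Prod>i<n. x - d i) - (\<Sum>m<n. c m * (\<Prod>i\<in>{..<n} - {m}. x - d i))"
  by (simp add: secular_poly_def poly_prod poly_sum)

lemma char_poly_diag_plus_rank_one:
  fixes d u w :: "nat \<Rightarrow> 'a :: field_char_0"
  shows "char_poly (mat n n (\<lambda>(i, j). (if i = j then d i else 0) + u i * w j))
     = secular_poly n d (\<lambda>m. u m * w m)" (is "char_poly ?A = ?p")
proof -
  have agree: "poly (char_poly ?A) x = poly ?p x" if x: "x \<notin> d ` {..<n}" for x
  proof -
    have nz: "x - d i \<noteq> 0" if "i < n" for i
      using x that by auto
    have "poly (char_poly ?A) x = det (- char_matrix ?A x)"
      by (rule char_poly_matrix[of _ n]) simp
    also have "- char_matrix ?A x = mat n n (\<lambda>(i, j). (if i = j then x - d i else 0) - u i * w j)"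
      by (rule eq_matI) (auto simp: char_matrix_def)
    also have "det \<dots> = (\<Prod>i<n. x - d i) * (1 - (\<Sum>i<n. u i * w i / (x - d i)))"
      using nz by (rule det_diag_minus_rank_one)
    also have "\<dots> = poly ?p x"
      using nz by (simp add: poly_secular_poly right_diff_distrib sum_distrib_left prod.remove[of "{..<n}"] mult_ac)
    finally show ?thesis .
  qed
  show ?thesis
  proof (rule ccontr)
    assume "char_poly ?A \<noteq> ?p"
    hence "finite {x. poly (char_poly ?A - ?p) x = 0}"
      by (intro poly_roots_finite) simp
    moreover have "- d ` {..<n} \<subseteq> {x. poly (char_poly ?A - ?p) x = 0}"
      using agree by auto
    ultimately have "finite (- d ` {..<n})"
      by (rule finite_subset[rotated])
    thus False
      using infinite_UNIV_char_0 by (metis Compl_partition2 finite_Un finite_imageI finite_lessThan)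
  qed
qed

lemma prod_diff_divide_scale:
  fixes c x :: "'a :: field"
  assumes "c \<noteq> 0"
  shows "c ^ card I * (\<Prod>i\<in>I. x / c - b i) = (\<Prod>i\<in>I. x - c * b i)"
proof (cases "finite I")
  case True
  have "c ^ card I * (\<Prod>i\<in>I. x / c - b i) = (\<Prod>i\<in>I. c * (x / c - b i))"
    using True by (simp add: prod.distrib)
  also have "\<dots> = (\<Prod>i\<in>I. x - c * b i)"
    using assms by (simp add: right_diff_distrib)
  finally show ?thesis .
qed simp

lemma poly_roots_poly: "poly (roots_poly n w) x = (\<Prod>j<n. x - w j)"
  by (simp add: roots_poly_def poly_prod)

lemma degree_roots_poly: "degree (roots_poly n w) = n"
  unfolding roots_poly_def by (subst degree_prod_eq_sum_degree) auto

lemma lead_coeff_roots_poly: "lead_coeff (roots_poly n w) = 1"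
  unfolding roots_poly_def lead_coeff_prod by simp

lemma poly_roots_poly_scale:
  fixes c :: complex
  assumes "c \<noteq> 0"
  shows "poly (roots_poly n (\<lambda>j. c * w j)) x = c ^ n * poly (roots_poly n w) (x / c)"
  using prod_diff_divide_scale[OF assms, of "{..<n}" x w] by (simp add: poly_roots_poly)

lemma poly_secular_poly_scale:
  fixes c :: "'a :: field"
  assumes "c \<noteq> 0"
  shows "poly (secular_poly n (\<lambda>i. c * d i) (\<lambda>m. c * w m)) x = c ^ n * poly (secular_poly n d w) (x / c)"
proof -
  have summand: "c ^ n * (w m * (\<Prod>i\<in>{..<n} - {m}. x / c - d i)) = c * w m * (\<Prod>i\<in>{..<n} - {m}. x - c * d i)"
    if "m < n" for m
  proof -
    have "c ^ n = c * c ^ card ({..<n} - {m})"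
      using that by (cases n) auto
    thus ?thesis
      using prod_diff_divide_scale[OF assms, of "{..<n} - {m}" x d] by (simp add: mult_ac)
  qed
  have "c ^ n * (\<Sum>m<n. w m * (\<Prod>i\<in>{..<n} - {m}. x / c - d i))
      = (\<Sum>m<n. c * w m * (\<Prod>i\<in>{..<n} - {m}. x - c * d i))"
    unfolding sum_distrib_left by (intro sum.cong) (auto simp: summand)
  thus ?thesis
    using prod_diff_divide_scale[OF assms, of "{..<n}" x d]
    by (simp add: poly_secular_poly right_diff_distrib)
qed

lemma poly_secular_poly_node:
  assumes "inj_on d {..<n}" and "k < n"
  shows "poly (secular_poly n d c) (d k) = - c k * (\<Prod>i\<in>{..<n} - {k}. d k - d i)"
proof -
  have "(\<Prod>i\<in>{..<n} - {m}. d k - d i) = 0" if "m < n" "m \<noteq> k" for m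
    using assms that by (intro prod_zero) auto
  hence "(\<Sum>m<n. c m * (\<Prod>i\<in>{..<n} - {m}. d k - d i)) = c k * (\<Prod>i\<in>{..<n} - {k}. d k - d i)"
    using assms(2) by (subst sum.remove[of _ k]) (auto intro!: sum.neutral)
  moreover have "(\<Prod>i<n. d k - d i) = 0"
    using assms(2) by (intro prod_zero) auto
  ultimately show ?thesis
    by (simp add: poly_secular_poly)
qed

lemma geom_factor_rec: "geom_factor a (l + 2) = (1 + a) * geom_factor a (l + 1) - a * geom_factor a l"
proof (cases "a = 1")
  case False
  have "(1 + a) * (X / (a - 1)) - a * (Y / (a - 1)) = ((1 + a) * X - a * Y) / (a - 1)" for X Y
    by (simp add: diff_divide_distrib)
  hence "(1 + a) * ((a ^ (l + 1) - 1) / (a - 1)) - a * ((a ^ l - 1) / (a - 1))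
      = ((1 + a) * (a ^ (l + 1) - 1) - a * (a ^ l - 1)) / (a - 1)" .
  also have "\<dots> = (a ^ (l + 2) - 1) / (a - 1)"
    by (simp add: algebra_simps)
  finally show ?thesis
    using False by (simp add: geom_factor_def)
qed (simp add: geom_factor_def)

lemma char_poly_Umat:
  "char_poly (Umat N a z l) = secular_poly N (\<lambda>i. a ^ l * z 0 i) (\<lambda>m. geom_factor a l * v0 N a z m)"
proof -
  have "Umat N a z l = mat N N (\<lambda>(i, j). (if i = j then a ^ l * z 0 i else 0) + 1 * (geom_factor a l * v0 N a z j))"
    by (rule eq_matI) (auto simp: Umat_def mult_ac)
  thus ?thesis
    using char_poly_diag_plus_rank_one[of N "\<lambda>i. a ^ l * z 0 i" "\<lambda>_. 1"] by simp
qed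

lemma roots_poly_eq_char_poly_Umat_0: "roots_poly N (z 0) = char_poly (Umat N a z 0)"
  by (simp add: char_poly_Umat secular_poly_def roots_poly_def geom_factor_def)

lemma roots_poly_eq_char_poly_Umat_1:
  assumes a: "a \<noteq> 0"
    and distinct: "\<And>i j. i < N \<Longrightarrow> j < N \<Longrightarrow> i \<noteq> j \<Longrightarrow> z 0 i \<noteq> z 0 j"
  shows "roots_poly N (z 1) = char_poly (Umat N a z 1)"
proof -
  have inj: "inj_on (\<lambda>i. a * z 0 i) {..<N}"
    using a distinct by (auto simp: inj_on_def)
  have monic: "degree (char_poly (Umat N a z 1)) = N \<and> coeff (char_poly (Umat N a z 1)) N = 1"
    by (rule degree_monic_char_poly[of _ N]) (simp add: Umat_def)
  show ?thesis
  proof (rule poly_eqI_degree_lead_coeff[where n = N and A = "(\<lambda>i. a * z 0 i) ` {..<N}"])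
    fix x assume "x \<in> (\<lambda>i. a * z 0 i) ` {..<N}"
    then obtain k where k: "k < N" and x: "x = a * z 0 k"
      by auto
    define P where "P = (\<Prod>j<N. z 1 j - a * z 0 k)"
    define D where "D = (\<Prod>j\<in>{..<N} - {k}. a * (z 0 j - z 0 k))"
    have "D \<noteq> 0"
      using a distinct k by (auto simp: D_def)
    have N: "N = Suc (N - 1)"
      using k by simp
    have v0: "v0 N a z k = P / D"
      by (simp add: v0_def P_def D_def)
    have "(\<Prod>i\<in>{..<N} - {k}. a * z 0 k - a * z 0 i) = (-1) ^ (N - 1) * D"
      unfolding D_def using k by (subst prod_diff_swap) (simp add: right_diff_distrib)
    hence "poly (char_poly (Umat N a z 1)) x = - (P / D) * ((-1) ^ (N - 1) * D)"
      using poly_secular_poly_node[OF inj k, of "\<lambda>m. geom_factor a 1 * v0 N a z m"]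
      by (simp add: char_poly_Umat x geom_factor_def v0)
    also have "\<dots> = (-1) ^ N * P"
      using \<open>D \<noteq> 0\<close> by (subst (2) N) simp
    also have "\<dots> = poly (roots_poly N (z 1)) x"
      unfolding poly_roots_poly P_def x by (subst prod_diff_swap) simp
    finally show "poly (roots_poly N (z 1)) x = poly (char_poly (Umat N a z 1)) x"
      by (rule sym)
  qed (use monic inj lead_coeff_roots_poly[of N "z 1"] in \<open>simp_all add: degree_roots_poly card_image\<close>)
qed

lemma roots_poly_eq_char_poly_Umat_step:
  assumes a: "a \<noteq> 0"
    and evol: "Polynomial.smult (- a) (roots_poly N (z (l + 2)))
        = (\<Prod>j<N. [:- (a\<^sup>2 * z l j), 1:]) - Polynomial.smult (1 + a) (\<Prod>j<N. [:- (a * z (l + 1) j), 1:])"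
    and IH0: "roots_poly N (z l) = char_poly (Umat N a z l)"
    and IH1: "roots_poly N (z (l + 1)) = char_poly (Umat N a z (l + 1))"
  shows "roots_poly N (z (l + 2)) = char_poly (Umat N a z (l + 2))"
proof -
  define A where "A x = (\<Prod>i<N. x - a ^ (l + 2) * z 0 i)" for x
  define T where "T x = (\<Sum>m<N. v0 N a z m * (\<Prod>i\<in>{..<N} - {m}. x - a ^ (l + 2) * z 0 i))" for x
  have secular: "poly (secular_poly N (\<lambda>i. a ^ (l + 2) * z 0 i) (\<lambda>m. \<beta> * v0 N a z m)) x = A x - \<beta> * T x"
    for \<beta> x by (simp add: poly_secular_poly A_def T_def sum_distrib_left mult.assoc)
  have rescaled: "poly (roots_poly N (\<lambda>j. c * z k j)) x = A x - c * geom_factor a k * T x"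
    if c: "c \<noteq> 0" "c * a ^ k = a ^ (l + 2)" and IH: "roots_poly N (z k) = char_poly (Umat N a z k)"
    for c k x
  proof -
    have "poly (roots_poly N (\<lambda>j. c * z k j)) x = c ^ N * poly (char_poly (Umat N a z k)) (x / c)"
      using poly_roots_poly_scale[OF c(1)] IH by simp
    also have "\<dots> = poly (secular_poly N (\<lambda>i. c * (a ^ k * z 0 i)) (\<lambda>m. c * (geom_factor a k * v0 N a z m))) x"
      unfolding char_poly_Umat poly_secular_poly_scale[OF c(1)] ..
    also have "\<dots> = A x - c * geom_factor a k * T x"
      using c(2) secular[of "c * geom_factor a k"] by (simp add: mult.assoc[symmetric])
    finally show ?thesis .
  qed
  have "poly (Polynomial.smult (- a) (roots_poly N (z (l + 2)))) x
      = poly (Polynomial.smult (- a) (char_poly (Umat N a z (l + 2)))) x" for x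
  proof -
    have "poly (Polynomial.smult (- a) (roots_poly N (z (l + 2)))) x
        = poly (roots_poly N (\<lambda>j. a\<^sup>2 * z l j)) x - (1 + a) * poly (roots_poly N (\<lambda>j. a * z (l + 1) j)) x"
      unfolding evol by (simp add: roots_poly_def)
    also have "\<dots> = (A x - a\<^sup>2 * geom_factor a l * T x) - (1 + a) * (A x - a * geom_factor a (l + 1) * T x)"
      using rescaled[of "a\<^sup>2" l, OF _ _ IH0] rescaled[of a "l + 1", OF _ _ IH1] a
      by (simp add: power_add power2_eq_square)
    also have "\<dots> = - a * (A x - geom_factor a (l + 2) * T x)"
      unfolding geom_factor_rec by (simp add: algebra_simps power2_eq_square)
    also have "\<dots> = poly (Polynomial.smult (- a) (char_poly (Umat N a z (l + 2)))) x"
      by (simp only: poly_smult char_poly_Umat secular)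
    finally show ?thesis .
  qed
  thus ?thesis
    using a by (metis poly_ext smult_cancel neg_equal_0_iff_equal)
qed

theorem proposition2p1p1:
  fixes N :: nat and a :: complex and z :: "nat \<Rightarrow> nat \<Rightarrow> complex"
  assumes "N \<ge> 1" and "a \<noteq> 0"
    and distinct: "\<And>l i j. i < N \<Longrightarrow> j < N \<Longrightarrow> i \<noteq> j \<Longrightarrow> z l i \<noteq> z l j"
    and denom: "\<And>l n j. n < N \<Longrightarrow> j < N \<Longrightarrow> z (l + 2) n \<noteq> a * z (l + 1) j"
    and evol: "\<And>l. Polynomial.smult (- a) (roots_poly N (z (l + 2)))
        = (\<Prod>j<N. [:- (a\<^sup>2 * z l j), 1:]) - Polynomial.smult (1 + a) (\<Prod>j<N. [:- (a * z (l + 1) j), 1:])"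
  shows "\<forall>l. char_poly (Umat N a z l) = roots_poly N (z l)"
proof -
  have "roots_poly N (z l) = char_poly (Umat N a z l)
      \<and> roots_poly N (z (l + 1)) = char_poly (Umat N a z (l + 1))" for l
  proof (induction l)
    case 0
    show ?case
      using roots_poly_eq_char_poly_Umat_0 roots_poly_eq_char_poly_Umat_1[of a N z, OF \<open>a \<noteq> 0\<close> distinct] by simp
  next
    case (Suc l)
    thus ?case
      using roots_poly_eq_char_poly_Umat_step[OF \<open>a \<noteq> 0\<close> evol] by simp
  qed
  thus ?thesis
    by simp
qed

end
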